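(* Let $X=\{x_i\}_{i\in\mathbb Z}$ be an equidistant discretization of $\mathbb R$ with $x_i<x_j$ for $i<j$, let $p$ be a noise function on $X$, and let $M_q$ be the additive noise mechanism with noise $p$ for a query $q$ of sensitivity $s$, where $s=x_i-x_j$ for some $i,j\in\mathbb Z$. Let $\varepsilon,\delta\ge 0$. Suppose that for every $r\in\{x_i-x_j: i,j\in\mathbb Z\}$ with $r\le s$ and every $S\subseteq X$, $$\sum_{x\in S}p(x)\le\delta+e^{\varepsilon}\sum_{x\in S}p(x+r).$$ Then $M_q$ is $(\varepsilon,\delta)$-ADP for any query output in $\mathbb R$.
   Context: A noise function on $X$ is a map $p:X\to[0,1]$ with $\sum_{x\in X}p(x)=1$ (with $p(y)$ understood for $y=x+r\in X$). Sampling from $p$: first sample $x_i\in X$ with probability $p(x_i)$, then sample uniformly from $[\tfrac{x_{i-1}+x_i}{2},\tfrac{x_i+x_{i+1}}{2})$; thus the continuous noise has density $\sum_{x\in X}\mathbb 1[\,y\in[x-\nu/2,x+\nu/2)\,]\,p(x)/\nu$, where $\nu$ is the grid spacing. For a query $q:\mathcal D\to\mathbb R$ on databases with a neighboring relation, its sensitivity is $s=\max_{D_1,D_2\text{ neighboring}}|q(D_1)-q(D_2)|$. The additive noise mechanism is $M_q(D)=q(D)+y$ with $y$ sampled from $p$. A mechanism $M$ is $(\varepsilon,\delta)$-ADP if for all measurable output sets $S$ and all neighboring $D_0,D_1$: $\Pr[M(D_0)\in S]\le e^{\varepsilon}\Pr[M(D_1)\in S]+\delta$. *)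

theory Defs
  imports "HOL-Probability.Probability"
begin

definition equidistant_grid :: "(int \<Rightarrow> real) \<Rightarrow> real \<Rightarrow> bool" where
  "equidistant_grid x \<nu> \<longleftrightarrow> \<nu> > 0 \<and> (\<forall>i. x i = x 0 + real_of_int i * \<nu>)"

definition noise_function :: "real set \<Rightarrow> (real \<Rightarrow> real) \<Rightarrow> bool" where
  "noise_function X p \<longleftrightarrow> (\<forall>x\<in>X. 0 \<le> p x \<and> p x \<le> 1) \<and> (p has_sum 1) X"

text \<open>Density of the continuous noise obtained by sampling a grid point x i with
  probability p (x i) and then uniformly from [x i - nu/2, x i + nu/2).\<close>
definition noise_density :: "(int \<Rightarrow> real) \<Rightarrow> real \<Rightarrow> (real \<Rightarrow> real) \<Rightarrow> real \<Rightarrow> real" where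
  "noise_density x \<nu> p y =
     (\<Sum>\<^sub>\<infinity>i\<in>(UNIV::int set). indicator {x i - \<nu>/2 ..< x i + \<nu>/2} y * p (x i) / \<nu>)"

definition noise_measure :: "(int \<Rightarrow> real) \<Rightarrow> real \<Rightarrow> (real \<Rightarrow> real) \<Rightarrow> real measure" where
  "noise_measure x \<nu> p = density lborel (\<lambda>y. ennreal (noise_density x \<nu> p y))"

definition additive_noise_mechanism ::
  "(int \<Rightarrow> real) \<Rightarrow> real \<Rightarrow> (real \<Rightarrow> real) \<Rightarrow> ('d \<Rightarrow> real) \<Rightarrow> 'd \<Rightarrow> real measure" where
  "additive_noise_mechanism x \<nu> p q D = distr (noise_measure x \<nu> p) borel (\<lambda>y. q D + y)"

definition is_sensitivity :: "('d \<Rightarrow> 'd \<Rightarrow> bool) \<Rightarrow> ('d \<Rightarrow> real) \<Rightarrow> real \<Rightarrow> bool" where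
  "is_sensitivity nb q s \<longleftrightarrow>
     (\<forall>D1 D2. nb D1 D2 \<longrightarrow> \<bar>q D1 - q D2\<bar> \<le> s) \<and>
     (\<exists>D1 D2. nb D1 D2 \<and> \<bar>q D1 - q D2\<bar> = s)"

definition ADP :: "('d \<Rightarrow> 'd \<Rightarrow> bool) \<Rightarrow> ('d \<Rightarrow> real measure) \<Rightarrow> real \<Rightarrow> real \<Rightarrow> bool" where
  "ADP nb M \<epsilon> \<delta> \<longleftrightarrow>
     (\<forall>S \<in> sets borel. \<forall>D0 D1. nb D0 D1 \<longrightarrow>
        measure (M D0) S \<le> exp \<epsilon> * measure (M D1) S + \<delta>)"

end

theory Submission
  imports Defs
begin

text \<open>The noise density is a step function: it equals p(x i)/\<nu> on the cell
  [x i - \<nu>/2, x i + \<nu>/2). Tiling the line by translates of W = [-\<nu>/2, \<nu>/2) turns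
  an integral over y into an integral over u \<in> W of a sum over grid points. For outputs
  a0 = q D0 and a1 = q D1 with d = a0 - a1 \<le> s, tile the integral for a1 along the grid
  shifted by d: for each u both inner sums then run over the same index set
  T = {i. a0 + x i + u \<in> S}, of p (x i) and of p (x (i + n)) respectively, where
  n \<nu> \<le> s. The discrete hypothesis for r = x n - x 0 compares them pointwise in u, and
  integrating over W, of length \<nu>, gives the (\<epsilon>, \<delta>) bound.\<close>

lemma nn_integral_count_space_eq_infsum:
  fixes g :: "'a \<Rightarrow> real"
  assumes "g summable_on A" and "\<And>i. i \<in> A \<Longrightarrow> g i \<ge> 0"
  shows "(\<integral>\<^sup>+i. ennreal (g i) \<partial>count_space A) = ennreal (\<Sum>\<^sub>\<infinity>i\<in>A. g i)"
proof -
  have "(\<lambda>i. norm (g i)) summable_on A"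
    using assms(1) summable_on_iff_abs_summable_on_real by blast
  note abs_summable = this[unfolded abs_summable_equivalent]
  show ?thesis
    using assms(2) by (simp add: nn_integral_conv_infsetsum[OF abs_summable] infsetsum_infsum[OF abs_summable])
qed

lemma borel_measurable_nn_integral_count_space:
  fixes f :: "'i \<Rightarrow> 'a \<Rightarrow> ennreal"
  assumes "countable I" and "\<And>i. i \<in> I \<Longrightarrow> f i \<in> borel_measurable M"
  shows "(\<lambda>u. \<integral>\<^sup>+i. f i u \<partial>count_space I) \<in> borel_measurable M"
proof -
  interpret I: sigma_finite_measure "count_space I"
    using \<open>countable I\<close> by (rule sigma_finite_measure_count_space_countable)
  have "(\<lambda>z. f (snd z) (fst z)) \<in> borel_measurable (M \<Otimes>\<^sub>M count_space I)"
    by (rule measurable_compose_countable'[where f = "\<lambda>i z. f i (fst z)"]) (use assms in auto)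
  then show ?thesis
    by (intro I.borel_measurable_nn_integral) (simp add: case_prod_beta)
qed

lemma grid_cell_iff:
  fixes \<nu> c y :: real and i :: int
  assumes "\<nu> > 0"
  shows "y \<in> {c + of_int i * \<nu> - \<nu>/2..<c + of_int i * \<nu> + \<nu>/2} \<longleftrightarrow> \<lfloor>(y - c)/\<nu> + 1/2\<rfloor> = i"
proof -
  have "y \<in> {c + of_int i * \<nu> - \<nu>/2..<c + of_int i * \<nu> + \<nu>/2} \<longleftrightarrow>
      of_int i \<le> (y - c)/\<nu> + 1/2 \<and> (y - c)/\<nu> + 1/2 < of_int i + 1"
    using assms by (simp add: field_simps)
  then show ?thesis
    by (simp add: floor_eq_iff)
qed

lemma nn_integral_lborel_cell_decomposition:
  fixes F :: "real \<Rightarrow> ennreal"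
  assumes "\<nu> > 0" and [measurable]: "F \<in> borel_measurable borel"
  shows "(\<integral>\<^sup>+y. F y \<partial>lborel) =
    (\<integral>\<^sup>+u\<in>{-\<nu>/2..<\<nu>/2}. (\<integral>\<^sup>+i. F (c + of_int i * \<nu> + u) \<partial>count_space UNIV) \<partial>lborel)"
proof -
  let ?W = "{-\<nu>/2..<\<nu>/2}"
  let ?cell = "\<lambda>i::int. {c + of_int i * \<nu> - \<nu>/2..<c + of_int i * \<nu> + \<nu>/2}"
  have cover: "(\<integral>\<^sup>+i. F y * indicator (?cell i) y \<partial>count_space UNIV) = F y" for y
  proof -
    have "indicator (?cell i) y = (indicator {\<lfloor>(y - c)/\<nu> + 1/2\<rfloor>} i :: ennreal)" for i
      using grid_cell_iff[OF assms(1), of y c i] by (auto simp: indicator_def)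
    then show ?thesis
      by (simp add: nn_integral_cmult_indicator)
  qed
  have "(\<integral>\<^sup>+y. F y \<partial>lborel) =
      (\<integral>\<^sup>+y. (\<integral>\<^sup>+i. F y * indicator (?cell i) y \<partial>count_space UNIV) \<partial>lborel)"
    by (intro nn_integral_cong) (rule cover[symmetric])
  also have "\<dots> = (\<integral>\<^sup>+i. (\<integral>\<^sup>+y. F y * indicator (?cell i) y \<partial>lborel) \<partial>count_space UNIV)"
    by (rule nn_integral_count_space_nn_integral) (simp, measurable)
  also have "\<dots> = (\<integral>\<^sup>+i. (\<integral>\<^sup>+u. F (c + of_int i * \<nu> + u) * indicator ?W u \<partial>lborel) \<partial>count_space UNIV)"
  proof (rule nn_integral_cong)
    fix i :: int
    have "(\<integral>\<^sup>+y. F y * indicator (?cell i) y \<partial>lborel) =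
        (\<integral>\<^sup>+u. F (c + of_int i * \<nu> + u) * indicator (?cell i) (c + of_int i * \<nu> + u) \<partial>lborel)"
      using nn_integral_real_affine[where c = 1 and t = "c + of_int i * \<nu>"
          and f = "\<lambda>y. F y * indicator (?cell i) y"] by simp
    also have "\<dots> = (\<integral>\<^sup>+u. F (c + of_int i * \<nu> + u) * indicator ?W u \<partial>lborel)"
      by (intro nn_integral_cong) (auto simp: indicator_def)
    finally show "(\<integral>\<^sup>+y. F y * indicator (?cell i) y \<partial>lborel) =
        (\<integral>\<^sup>+u. F (c + of_int i * \<nu> + u) * indicator ?W u \<partial>lborel)" .
  qed
  also have "\<dots> = (\<integral>\<^sup>+u. (\<integral>\<^sup>+i. F (c + of_int i * \<nu> + u) * indicator ?W u \<partial>count_space UNIV) \<partial>lborel)"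
    by (rule nn_integral_count_space_nn_integral[symmetric]) (simp, measurable)
  also have "\<dots> = (\<integral>\<^sup>+u\<in>?W. (\<integral>\<^sup>+i. F (c + of_int i * \<nu> + u) \<partial>count_space UNIV) \<partial>lborel)"
    by (intro nn_integral_cong) (simp add: nn_integral_multc)
  finally show ?thesis .
qed

locale grid_noise =
  fixes x :: "int \<Rightarrow> real" and \<nu> :: real and p :: "real \<Rightarrow> real"
  assumes grid: "equidistant_grid x \<nu>"
    and noise: "noise_function (range x) p"
begin

lemma spacing_pos: "\<nu> > 0"
  using grid by (simp add: equidistant_grid_def)

lemma grid_point: "x i = x 0 + of_int i * \<nu>"
  using grid unfolding equidistant_grid_def by blast

lemma grid_add: "x i + of_int n * \<nu> = x (i + n)"
proof -
  have "x (i + n) = x 0 + of_int i * \<nu> + of_int n * \<nu>"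
    using grid_point[of "i + n"] by (simp add: distrib_right)
  then show ?thesis
    using grid_point[of i] by simp
qed

lemma inj_grid: "inj x"
proof (rule injI)
  fix i j
  assume "x i = x j"
  then have "of_int i * \<nu> = of_int j * \<nu>"
    using grid_point[of i] grid_point[of j] by linarith
  then show "i = j"
    using spacing_pos by simp
qed

lemma infsum_grid_image: "(\<Sum>\<^sub>\<infinity>y\<in>x ` T. f y) = (\<Sum>\<^sub>\<infinity>i\<in>T. f (x i))"
  using infsum_reindex[OF inj_on_subset[OF inj_grid], of T f] by (simp add: comp_def)

lemma noise_nonneg: "p (x i) \<ge> 0"
  using noise by (simp add: noise_function_def)

lemma noise_has_sum: "((\<lambda>i. p (x i)) has_sum 1) UNIV"
proof -
  have "(p has_sum 1) (x ` UNIV)"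
    using noise by (simp add: noise_function_def)
  then show ?thesis
    using has_sum_reindex[OF inj_grid, of p 1] by (simp add: comp_def)
qed

lemma noise_infsum: "(\<Sum>\<^sub>\<infinity>i. p (x i)) = 1"
  using noise_has_sum by (rule infsumI)

lemma noise_summable: "(\<lambda>i. p (x (i + n))) summable_on A"
proof -
  have "bij_betw (\<lambda>i. i + n) UNIV UNIV"
    by (rule bij_betwI[where g = "\<lambda>i. i - n"]) auto
  moreover have "(\<lambda>i. p (x i)) summable_on UNIV"
    using noise_has_sum by (rule has_sum_imp_summable)
  ultimately have "(\<lambda>i. p (x (i + n))) summable_on UNIV"
    by (simp add: summable_on_reindex_bij_betw[where f = "\<lambda>i. p (x i)"])
  then show ?thesis
    by (rule summable_on_subset_banach) simp
qed

lemma noise_density_grid: "noise_density x \<nu> p (x i + t) = p (x (i + \<lfloor>t/\<nu> + 1/2\<rfloor>)) / \<nu>"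
proof -
  let ?k = "i + \<lfloor>t/\<nu> + 1/2\<rfloor>"
  have "\<lfloor>(x i + t - x 0)/\<nu> + 1/2\<rfloor> = \<lfloor>(t/\<nu> + 1/2) + of_int i\<rfloor>"
    using spacing_pos by (intro arg_cong[where f = floor]) (simp add: grid_point[of i] field_simps)
  also have "\<dots> = ?k"
    by (subst floor_add_int[symmetric]) (rule add.commute)
  finally have index: "\<lfloor>(x i + t - x 0)/\<nu> + 1/2\<rfloor> = ?k" .
  have "x i + t \<in> {x j - \<nu>/2..<x j + \<nu>/2} \<longleftrightarrow> \<lfloor>(x i + t - x 0)/\<nu> + 1/2\<rfloor> = j" for j
    using grid_cell_iff[OF spacing_pos, of "x i + t" "x 0" j] by (simp only: grid_point[of j])
  then have cell: "indicator {x j - \<nu>/2..<x j + \<nu>/2} (x i + t) = (of_bool (j = ?k) :: real)" for j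
    using index by (auto simp: indicator_def)
  have "noise_density x \<nu> p (x i + t) = (\<Sum>\<^sub>\<infinity>j\<in>{?k}. p (x j) / \<nu>)"
    unfolding noise_density_def cell by (rule infsum_cong_neutral) auto
  then show ?thesis
    by simp
qed

lemma borel_measurable_noise_density [measurable]: "noise_density x \<nu> p \<in> borel_measurable borel"
proof -
  have "noise_density x \<nu> p y = p (x \<lfloor>(y - x 0)/\<nu> + 1/2\<rfloor>) / \<nu>" for y
    using noise_density_grid[of 0 "y - x 0"] by simp
  then have eq: "noise_density x \<nu> p = (\<lambda>y. p (x \<lfloor>(y - x 0)/\<nu> + 1/2\<rfloor>) / \<nu>)"
    by (rule ext)
  show ?thesis
    unfolding eq by measurable
qed

lemma nn_integral_noise_density_grid:
  "(\<integral>\<^sup>+i\<in>T. ennreal (noise_density x \<nu> p (x i + t)) \<partial>count_space UNIV) =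
    ennreal ((\<Sum>\<^sub>\<infinity>i\<in>T. p (x (i + \<lfloor>t/\<nu> + 1/2\<rfloor>))) / \<nu>)"
proof -
  let ?f = "\<lambda>i. p (x (i + \<lfloor>t/\<nu> + 1/2\<rfloor>)) / \<nu>"
  have sum: "(?f has_sum (\<Sum>\<^sub>\<infinity>i\<in>T. p (x (i + \<lfloor>t/\<nu> + 1/2\<rfloor>))) / \<nu>) T"
    by (intro has_sum_divide_const has_sum_infsum noise_summable)
  have "(\<integral>\<^sup>+i\<in>T. ennreal (noise_density x \<nu> p (x i + t)) \<partial>count_space UNIV) =
      (\<integral>\<^sup>+i\<in>T. ennreal (?f i) \<partial>count_space UNIV)"
    by (simp only: noise_density_grid)
  also have "\<dots> = (\<integral>\<^sup>+i. ennreal (?f i) \<partial>count_space T)"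
    by (rule nn_integral_count_space_indicator[symmetric]) (simp add: NO_MATCH_def)
  also have "\<dots> = ennreal (\<Sum>\<^sub>\<infinity>i\<in>T. ?f i)"
    using sum spacing_pos noise_nonneg
    by (intro nn_integral_count_space_eq_infsum) (auto simp: summable_on_def)
  also have "\<dots> = ennreal ((\<Sum>\<^sub>\<infinity>i\<in>T. p (x (i + \<lfloor>t/\<nu> + 1/2\<rfloor>))) / \<nu>)"
    using sum by (simp add: infsumI)
  finally show ?thesis .
qed

lemma nn_integral_lborel_grid_cells:
  assumes "F \<in> borel_measurable borel"
  shows "(\<integral>\<^sup>+y. F y \<partial>lborel) =
    (\<integral>\<^sup>+u\<in>{-\<nu>/2..<\<nu>/2}. (\<integral>\<^sup>+i. F (x i + t + u) \<partial>count_space UNIV) \<partial>lborel)"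
proof -
  have "x 0 + t + of_int i * \<nu> + u = x i + t + u" for i u
    by (simp add: grid_point[of i])
  then show ?thesis
    using nn_integral_lborel_cell_decomposition[OF spacing_pos assms, of "x 0 + t"] by (simp only:)
qed

lemma cell_floor_zero: "u \<in> {-\<nu>/2..<\<nu>/2} \<Longrightarrow> \<lfloor>u/\<nu> + 1/2\<rfloor> = 0"
  using grid_cell_iff[OF spacing_pos, of u 0 0] by simp

lemma prob_space_noise_measure: "prob_space (noise_measure x \<nu> p)"
proof
  let ?W = "{-\<nu>/2..<\<nu>/2}"
  have "emeasure (noise_measure x \<nu> p) (space (noise_measure x \<nu> p)) =
      (\<integral>\<^sup>+y. ennreal (noise_density x \<nu> p y) \<partial>lborel)"
    by (simp add: noise_measure_def emeasure_density)
  also have "\<dots> = (\<integral>\<^sup>+u\<in>?W.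
      (\<integral>\<^sup>+i. ennreal (noise_density x \<nu> p (x i + 0 + u)) \<partial>count_space UNIV) \<partial>lborel)"
    by (rule nn_integral_lborel_grid_cells) simp
  also have "\<dots> = (\<integral>\<^sup>+u\<in>?W. ennreal (1 / \<nu>) \<partial>lborel)"
  proof (rule nn_integral_cong)
    fix u
    show "(\<integral>\<^sup>+i. ennreal (noise_density x \<nu> p (x i + 0 + u)) \<partial>count_space UNIV) * indicator ?W u =
        ennreal (1 / \<nu>) * indicator ?W u"
    proof (cases "u \<in> ?W")
      case True
      then show ?thesis
        using nn_integral_noise_density_grid[where T = UNIV and t = u]
        by (simp add: cell_floor_zero noise_infsum)
    qed simp
  qed
  also have "\<dots> = 1"
    using spacing_pos by (simp add: nn_integral_cmult_indicator ennreal_mult[symmetric])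
  finally show "emeasure (noise_measure x \<nu> p) (space (noise_measure x \<nu> p)) = 1" .
qed

lemma prob_space_additive_noise_mechanism: "prob_space (additive_noise_mechanism x \<nu> p q D)"
  unfolding additive_noise_mechanism_def
  by (rule prob_space.prob_space_distr[OF prob_space_noise_measure]) (simp add: noise_measure_def)

lemma emeasure_additive_noise_mechanism:
  assumes [measurable]: "S \<in> sets borel"
  shows "emeasure (additive_noise_mechanism x \<nu> p q D) S =
    (\<integral>\<^sup>+y. ennreal (noise_density x \<nu> p y) * indicator S (q D + y) \<partial>lborel)"
proof -
  have "emeasure (additive_noise_mechanism x \<nu> p q D) S =
      emeasure (noise_measure x \<nu> p) ((\<lambda>y. q D + y) -` S)"
    unfolding additive_noise_mechanism_def by (subst emeasure_distr) (auto simp: noise_measure_def)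
  also have "\<dots> = (\<integral>\<^sup>+y. ennreal (noise_density x \<nu> p y) * indicator ((\<lambda>y. q D + y) -` S) y \<partial>lborel)"
    unfolding noise_measure_def
    by (rule emeasure_density) (use measurable_sets[OF _ assms, of "\<lambda>y. q D + y" borel] in simp_all)
  finally show ?thesis
    by (simp add: indicator_def)
qed

lemma nn_integral_grid_translate_le:
  assumes shift: "\<And>T n. n \<le> k \<Longrightarrow>
      (\<Sum>\<^sub>\<infinity>i\<in>T. p (x i)) \<le> \<delta> + exp \<epsilon> * (\<Sum>\<^sub>\<infinity>i\<in>T. p (x (i + n)))"
    and "\<delta> \<ge> 0" and "d \<le> of_int k * \<nu>" and u: "u \<in> {-\<nu>/2..<\<nu>/2}"
  shows "(\<integral>\<^sup>+i. ennreal (noise_density x \<nu> p (x i + u)) * indicator S (a + (x i + u)) \<partial>count_space UNIV) \<le>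
    ennreal (\<delta> / \<nu>) + ennreal (exp \<epsilon>) *
      (\<integral>\<^sup>+i. ennreal (noise_density x \<nu> p (x i + (d + u))) * indicator S (a + (x i + u)) \<partial>count_space UNIV)"
proof -
  define T where "T = {i. a + (x i + u) \<in> S}"
  define n where "n = \<lfloor>(d + u)/\<nu> + 1/2\<rfloor>"
  have indicator_T: "indicator S (a + (x i + u)) = (indicator T i :: ennreal)" for i
    by (simp add: T_def indicator_def)
  have lhs: "(\<integral>\<^sup>+i. ennreal (noise_density x \<nu> p (x i + u)) * indicator S (a + (x i + u)) \<partial>count_space UNIV) =
      ennreal ((\<Sum>\<^sub>\<infinity>i\<in>T. p (x i)) / \<nu>)"
    using nn_integral_noise_density_grid[where T = T and t = u]
    by (simp add: indicator_T cell_floor_zero[OF u])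
  have rhs: "(\<integral>\<^sup>+i. ennreal (noise_density x \<nu> p (x i + (d + u))) * indicator S (a + (x i + u)) \<partial>count_space UNIV) =
      ennreal ((\<Sum>\<^sub>\<infinity>i\<in>T. p (x (i + n))) / \<nu>)"
    using nn_integral_noise_density_grid[where T = T and t = "d + u"]
    by (simp add: indicator_T n_def)
  have "(d + u)/\<nu> + 1/2 < of_int k + 1"
    using u spacing_pos \<open>d \<le> of_int k * \<nu>\<close> by (simp add: field_simps)
  then have "n \<le> k"
    unfolding n_def by (simp add: floor_le_iff)
  then have "(\<Sum>\<^sub>\<infinity>i\<in>T. p (x i)) / \<nu> \<le> (\<delta> + exp \<epsilon> * (\<Sum>\<^sub>\<infinity>i\<in>T. p (x (i + n)))) / \<nu>"
    using shift[of n T] spacing_pos by (intro divide_right_mono) simp_all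
  also have "\<dots> = \<delta> / \<nu> + exp \<epsilon> * ((\<Sum>\<^sub>\<infinity>i\<in>T. p (x (i + n))) / \<nu>)"
    by (simp add: add_divide_distrib)
  finally have "ennreal ((\<Sum>\<^sub>\<infinity>i\<in>T. p (x i)) / \<nu>) \<le>
      ennreal (\<delta> / \<nu> + exp \<epsilon> * ((\<Sum>\<^sub>\<infinity>i\<in>T. p (x (i + n))) / \<nu>))"
    by (rule ennreal_leI)
  also have "\<dots> = ennreal (\<delta> / \<nu>) + ennreal (exp \<epsilon>) * ennreal ((\<Sum>\<^sub>\<infinity>i\<in>T. p (x (i + n))) / \<nu>)"
    using \<open>\<delta> \<ge> 0\<close> spacing_pos infsum_nonneg[of T "\<lambda>i. p (x (i + n))"] noise_nonneg
    by (simp add: ennreal_plus ennreal_mult[symmetric])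
  finally show ?thesis
    unfolding lhs rhs .
qed

lemma nn_integral_noise_translate_le:
  assumes shift: "\<And>T n. n \<le> k \<Longrightarrow>
      (\<Sum>\<^sub>\<infinity>i\<in>T. p (x i)) \<le> \<delta> + exp \<epsilon> * (\<Sum>\<^sub>\<infinity>i\<in>T. p (x (i + n)))"
    and "\<delta> \<ge> 0" and [measurable]: "S \<in> sets borel" and "a0 - a1 \<le> of_int k * \<nu>"
  shows "(\<integral>\<^sup>+y. ennreal (noise_density x \<nu> p y) * indicator S (a0 + y) \<partial>lborel) \<le>
    ennreal \<delta> + ennreal (exp \<epsilon>) * (\<integral>\<^sup>+y. ennreal (noise_density x \<nu> p y) * indicator S (a1 + y) \<partial>lborel)"
proof -
  let ?W = "{-\<nu>/2..<\<nu>/2}"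
  define G0 where "G0 u = (\<integral>\<^sup>+i. ennreal (noise_density x \<nu> p (x i + u)) *
      indicator S (a0 + (x i + u)) \<partial>count_space UNIV)" for u
  define G1 where "G1 u = (\<integral>\<^sup>+i. ennreal (noise_density x \<nu> p (x i + ((a0 - a1) + u))) *
      indicator S (a0 + (x i + u)) \<partial>count_space UNIV)" for u
  have E0: "(\<integral>\<^sup>+y. ennreal (noise_density x \<nu> p y) * indicator S (a0 + y) \<partial>lborel) =
      (\<integral>\<^sup>+u\<in>?W. G0 u \<partial>lborel)"
    using nn_integral_lborel_grid_cells[of "\<lambda>y. ennreal (noise_density x \<nu> p y) * indicator S (a0 + y)" 0]
    by (simp add: G0_def)
  \<comment> \<open>The a1-integral is tiled along the grid shifted by a0 - a1, so that its indicator
    matches the one of the a0-integral.\<close>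
  have "x i + (a0 - a1) + u = x i + ((a0 - a1) + u)" and "a1 + (x i + ((a0 - a1) + u)) = a0 + (x i + u)" for i u
    by simp_all
  moreover have "(\<lambda>y. ennreal (noise_density x \<nu> p y) * indicator S (a1 + y)) \<in> borel_measurable borel"
    by measurable
  ultimately have E1: "(\<integral>\<^sup>+y. ennreal (noise_density x \<nu> p y) * indicator S (a1 + y) \<partial>lborel) =
      (\<integral>\<^sup>+u\<in>?W. G1 u \<partial>lborel)"
    unfolding G1_def using nn_integral_lborel_grid_cells[where t = "a0 - a1"] by (simp only:)
  have "G0 u \<le> ennreal (\<delta> / \<nu>) + ennreal (exp \<epsilon>) * G1 u" if "u \<in> ?W" for u
    unfolding G0_def G1_def
    by (rule nn_integral_grid_translate_le[OF shift \<open>\<delta> \<ge> 0\<close> \<open>a0 - a1 \<le> of_int k * \<nu>\<close> that])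
  then have "(\<integral>\<^sup>+u\<in>?W. G0 u \<partial>lborel) \<le>
      (\<integral>\<^sup>+u. ennreal (\<delta> / \<nu>) * indicator ?W u + ennreal (exp \<epsilon>) * (G1 u * indicator ?W u) \<partial>lborel)"
    by (intro nn_integral_mono) (auto simp: indicator_def)
  also have "\<dots> = ennreal \<delta> + ennreal (exp \<epsilon>) * (\<integral>\<^sup>+u\<in>?W. G1 u \<partial>lborel)"
  proof -
    have "G1 \<in> borel_measurable borel"
      unfolding G1_def by (rule borel_measurable_nn_integral_count_space) simp_all
    then show ?thesis
      using spacing_pos \<open>\<delta> \<ge> 0\<close>
      by (simp add: nn_integral_add nn_integral_cmult nn_integral_cmult_indicator ennreal_mult[symmetric])
  qed
  finally show ?thesis
    using E0 E1 by simp
qed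

lemma shift_condition_grid_index:
  assumes hyp: "\<forall>r \<in> {x i - x j | i j. True}. r \<le> s \<longrightarrow>
      (\<forall>S \<subseteq> range x. (\<Sum>\<^sub>\<infinity>y\<in>S. p y) \<le> \<delta> + exp \<epsilon> * (\<Sum>\<^sub>\<infinity>y\<in>S. p (y + r)))"
    and "s = of_int k * \<nu>" and "n \<le> k"
  shows "(\<Sum>\<^sub>\<infinity>i\<in>T. p (x i)) \<le> \<delta> + exp \<epsilon> * (\<Sum>\<^sub>\<infinity>i\<in>T. p (x (i + n)))"
proof -
  have "x n - x 0 = of_int n * \<nu>"
    using grid_point[of n] by simp
  then have "x n - x 0 \<le> s"
    using assms(2,3) spacing_pos by (simp add: mult_right_mono)
  moreover have "x n - x 0 \<in> {x i - x j | i j. True}" and "x ` T \<subseteq> range x"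
    by blast+
  ultimately have "(\<Sum>\<^sub>\<infinity>y\<in>x ` T. p y) \<le> \<delta> + exp \<epsilon> * (\<Sum>\<^sub>\<infinity>y\<in>x ` T. p (y + (x n - x 0)))"
    using hyp by simp
  moreover have "x i + (x n - x 0) = x (i + n)" for i
    using grid_add[of i n] \<open>x n - x 0 = of_int n * \<nu>\<close> by simp
  ultimately show ?thesis
    by (simp add: infsum_grid_image)
qed

end

theorem lemma3:
  fixes x :: "int \<Rightarrow> real" and \<nu> :: real and p :: "real \<Rightarrow> real"
    and nb :: "'d \<Rightarrow> 'd \<Rightarrow> bool" and q :: "'d \<Rightarrow> real"
    and s \<epsilon> \<delta> :: real
  assumes grid: "equidistant_grid x \<nu>"
    and noise: "noise_function (range x) p"
    and sens: "is_sensitivity nb q s"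
    and s_grid: "\<exists>i j. s = x i - x j"
    and eps: "\<epsilon> \<ge> 0" and del: "\<delta> \<ge> 0"
    and hyp: "\<forall>r \<in> {x i - x j | i j. True}. r \<le> s \<longrightarrow>
               (\<forall>S \<subseteq> range x.
                  (\<Sum>\<^sub>\<infinity>y\<in>S. p y) \<le> \<delta> + exp \<epsilon> * (\<Sum>\<^sub>\<infinity>y\<in>S. p (y + r)))"
  shows "ADP nb (additive_noise_mechanism x \<nu> p q) \<epsilon> \<delta>"
proof -
  interpret grid_noise x \<nu> p
    using grid noise by unfold_locales
  obtain i0 j0 where "s = x i0 - x j0"
    using s_grid by blast
  then have s: "s = of_int (i0 - j0) * \<nu>"
    using grid_point[of i0] grid_point[of j0] by (simp add: algebra_simps)
  have shift: "\<And>T n. n \<le> i0 - j0 \<Longrightarrow>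
      (\<Sum>\<^sub>\<infinity>i\<in>T. p (x i)) \<le> \<delta> + exp \<epsilon> * (\<Sum>\<^sub>\<infinity>i\<in>T. p (x (i + n)))"
    by (rule shift_condition_grid_index[OF hyp s])
  show ?thesis
    unfolding ADP_def
  proof (intro ballI allI impI)
    fix S :: "real set" and D0 D1
    assume S: "S \<in> sets borel" and "nb D0 D1"
    interpret M0: prob_space "additive_noise_mechanism x \<nu> p q D0"
      by (rule prob_space_additive_noise_mechanism)
    interpret M1: prob_space "additive_noise_mechanism x \<nu> p q D1"
      by (rule prob_space_additive_noise_mechanism)
    have "\<bar>q D0 - q D1\<bar> \<le> s"
      using sens \<open>nb D0 D1\<close> unfolding is_sensitivity_def by blast
    then have diff: "q D0 - q D1 \<le> of_int (i0 - j0) * \<nu>"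
      using s by linarith
    have "emeasure (additive_noise_mechanism x \<nu> p q D0) S \<le>
        ennreal \<delta> + ennreal (exp \<epsilon>) * emeasure (additive_noise_mechanism x \<nu> p q D1) S"
      using nn_integral_noise_translate_le[OF shift del S diff]
      by (simp only: emeasure_additive_noise_mechanism[OF S])
    then have "ennreal (measure (additive_noise_mechanism x \<nu> p q D0) S) \<le>
        ennreal (\<delta> + exp \<epsilon> * measure (additive_noise_mechanism x \<nu> p q D1) S)"
      using del by (simp add: M0.emeasure_eq_measure M1.emeasure_eq_measure ennreal_plus ennreal_mult)
    then have "measure (additive_noise_mechanism x \<nu> p q D0) S \<le>
        \<delta> + exp \<epsilon> * measure (additive_noise_mechanism x \<nu> p q D1) S"
      by (rule ennreal_le_iff[THEN iffD1, rotated]) (use del in simp)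
    then show "measure (additive_noise_mechanism x \<nu> p q D0) S \<le>
        exp \<epsilon> * measure (additive_noise_mechanism x \<nu> p q D1) S + \<delta>"
      by linarith
  qed
qed

end
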